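(* Let $f:\mathbb N\to\mathbb N$ be a function, let $(G,d_G)$ be a countable group with a proper left invariant metric which is of growth type at most $f$, and let $(H,d_H)$ be another countable group with a proper left invariant metric. Then: (1) every subset $A\subseteq G$ (with the restricted metric) is of growth type at most $f$; (2) if there is a coarse embedding $H\to G$, then $H$ is of growth type at most $f$; (3) if $G$ is finitely generated, then $G$ has classical growth at most $f$; moreover, the growth type of $G$ exists and coincides with its classical growth.
   Context: A proper left invariant metric is $d(g,h)=\|g^{-1}h\|$ for a proper norm ($\|g\|=0$ iff $g=1$, $\|g\|=\|g^{-1}\|$, subadditive, finite balls). An $s$-scale chain of length $m$ from $x$ to $y$ is $x=x_0,\dots,x_m=y$ with $d(x_i,x_{i+1})<s$. For a metric space $X$, $g\in X$, $s>0$, $n\in\mathbb N$, $A_g^{(n,s)}$ is the set of $h\in X$ joined to $g$ by an $s$-scale chain in $X$ of length $n$, and $gr_{(s,g)}(n)=\#A_g^{(n,s)}$. $u\preceq v$ means there is $C>0$ with $u(x)\le Cv(Cx)$ for large $x$; $u,v$ have the same type if $u\preceq v\preceq u$. $X$ is of growth type at most $f$ if $gr_{(s,g)}\preceq f$ for all $g,s$; its growth type is $f$ if moreover $f\preceq gr_{(s,g)}$ for some $g,s$. For a finitely generated group with a word metric, its classical growth is the type of $n\mapsto\#B(1,n)$. A coarse embedding is a map that is a coarse equivalence onto its image, where $f$ is coarse if for every $\delta>0$ there is $\epsilon>0$ with $d(x,y)\le\delta\Rightarrow d(f(x),f(y))\le\epsilon$. *)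

theory Defs
  imports Complex_Main "HOL-Library.Countable_Set"
begin

text \<open>Groups are modelled by the type class group_add (not necessarily abelian;
  the group operation is written +, the identity 0, inverses -g).\<close>

definition proper_norm :: "('g::group_add \<Rightarrow> real) \<Rightarrow> bool" where
  "proper_norm nrm \<longleftrightarrow>
     (\<forall>g. nrm g = 0 \<longleftrightarrow> g = 0) \<and>
     (\<forall>g. nrm g = nrm (- g)) \<and>
     (\<forall>g h. nrm (g + h) \<le> nrm g + nrm h) \<and>
     (\<forall>r. finite {g. nrm g \<le> r})"

definition norm_metric :: "('g::group_add \<Rightarrow> real) \<Rightarrow> 'g \<Rightarrow> 'g \<Rightarrow> real" where
  "norm_metric nrm g h = nrm (- g + h)"

definition chain_set :: "('a \<Rightarrow> 'a \<Rightarrow> real) \<Rightarrow> 'a set \<Rightarrow> real \<Rightarrow> nat \<Rightarrow> 'a \<Rightarrow> 'a set" where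
  "chain_set d X s n g =
     {h \<in> X. \<exists>x :: nat \<Rightarrow> 'a. x 0 = g \<and> x n = h \<and> (\<forall>i\<le>n. x i \<in> X) \<and>
                       (\<forall>i<n. d (x i) (x (Suc i)) < s)}"

definition gr :: "('a \<Rightarrow> 'a \<Rightarrow> real) \<Rightarrow> 'a set \<Rightarrow> real \<Rightarrow> 'a \<Rightarrow> nat \<Rightarrow> nat" where
  "gr d X s g n = card (chain_set d X s n g)"

definition growth_le :: "(nat \<Rightarrow> nat) \<Rightarrow> (nat \<Rightarrow> nat) \<Rightarrow> bool" where
  "growth_le u v \<longleftrightarrow> (\<exists>C::nat. C > 0 \<and> (\<forall>\<^sub>F x in sequentially. u x \<le> C * v (C * x)))"

definition growth_type_at_most :: "('a \<Rightarrow> 'a \<Rightarrow> real) \<Rightarrow> 'a set \<Rightarrow> (nat \<Rightarrow> nat) \<Rightarrow> bool" where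
  "growth_type_at_most d X f \<longleftrightarrow> (\<forall>g\<in>X. \<forall>s>0. growth_le (gr d X s g) f)"

definition has_growth_type :: "('a \<Rightarrow> 'a \<Rightarrow> real) \<Rightarrow> 'a set \<Rightarrow> (nat \<Rightarrow> nat) \<Rightarrow> bool" where
  "has_growth_type d X f \<longleftrightarrow>
     growth_type_at_most d X f \<and> (\<exists>g\<in>X. \<exists>s>0. growth_le f (gr d X s g))"

definition coarse_map :: "('a \<Rightarrow> 'a \<Rightarrow> real) \<Rightarrow> 'a set \<Rightarrow> ('b \<Rightarrow> 'b \<Rightarrow> real) \<Rightarrow> 'b set
                          \<Rightarrow> ('a \<Rightarrow> 'b) \<Rightarrow> bool" where
  "coarse_map dX X dY Y f \<longleftrightarrow> (\<forall>x\<in>X. f x \<in> Y) \<and>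
     (\<forall>\<delta>>0. \<exists>\<epsilon>>0. \<forall>x\<in>X. \<forall>y\<in>X. dX x y \<le> \<delta> \<longrightarrow> dY (f x) (f y) \<le> \<epsilon>)"

definition coarse_equivalence :: "('a \<Rightarrow> 'a \<Rightarrow> real) \<Rightarrow> 'a set \<Rightarrow> ('b \<Rightarrow> 'b \<Rightarrow> real) \<Rightarrow> 'b set
                          \<Rightarrow> ('a \<Rightarrow> 'b) \<Rightarrow> bool" where
  "coarse_equivalence dX X dY Y f \<longleftrightarrow> coarse_map dX X dY Y f \<and>
     (\<exists>g. coarse_map dY Y dX X g \<and>
          (\<exists>C. \<forall>x\<in>X. dX (g (f x)) x \<le> C) \<and>
          (\<exists>C. \<forall>y\<in>Y. dY (f (g y)) y \<le> C))"

definition coarse_embedding :: "('a \<Rightarrow> 'a \<Rightarrow> real) \<Rightarrow> 'a set \<Rightarrow> ('b \<Rightarrow> 'b \<Rightarrow> real) \<Rightarrow> 'b set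
                          \<Rightarrow> ('a \<Rightarrow> 'b) \<Rightarrow> bool" where
  "coarse_embedding dX X dY Y f \<longleftrightarrow> (\<forall>x\<in>X. f x \<in> Y) \<and> coarse_equivalence dX X dY (f ` X) f"

definition generates :: "'g::group_add set \<Rightarrow> bool" where
  "generates S \<longleftrightarrow> (\<forall>h. \<exists>xs. set xs \<subseteq> S \<union> uminus ` S \<and> sum_list xs = h)"

definition word_ball :: "'g::group_add set \<Rightarrow> nat \<Rightarrow> 'g set" where
  "word_ball S n = {h. \<exists>xs. length xs \<le> n \<and> set xs \<subseteq> S \<union> uminus ` S \<and> sum_list xs = h}"

definition word_growth :: "'g::group_add set \<Rightarrow> nat \<Rightarrow> nat" where
  "word_growth S n = card (word_ball S n)"

end

theory Submission
  imports Defs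
begin

text \<open>In a group with a proper norm, an \<open>n\<close>-step chain of scale \<open>s\<close> stays in a ball of
  radius \<open>n s\<close>, so the chain sets are finite and can be compared by counting. Restricting to a
  subset only removes chains. A coarse embedding maps chains to chains of a larger scale and is
  uniformly finite-to-one, since a coarse inverse moves points by a bounded amount and balls are
  finite. For a finite generating set, a chain step is a word of bounded length and a generator
  is a chain step, so chain growth and word growth bound each other linearly.\<close>

lemma proper_norm_zero: "proper_norm nrm \<Longrightarrow> nrm 0 = 0"
  unfolding proper_norm_def by blast

lemma proper_norm_minus: "proper_norm nrm \<Longrightarrow> nrm (- g) = nrm g"
  unfolding proper_norm_def by metis

lemma proper_norm_add: "proper_norm nrm \<Longrightarrow> nrm (g + h) \<le> nrm g + nrm h"
  unfolding proper_norm_def by blast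

lemma proper_norm_nonneg:
  assumes "proper_norm nrm"
  shows "nrm g \<ge> 0"
proof -
  have "0 = nrm (g + - g)" using proper_norm_zero[OF assms] by simp
  also have "\<dots> \<le> nrm g + nrm (- g)" using proper_norm_add[OF assms] .
  finally show ?thesis using proper_norm_minus[OF assms] by simp
qed

lemma proper_norm_finite_ball: "proper_norm nrm \<Longrightarrow> finite {g. nrm g \<le> r}"
  unfolding proper_norm_def by blast

lemma ball_eq_translate:
  fixes nrm :: "'g::group_add \<Rightarrow> real"
  shows "{h. nrm (- a + h) \<le> r} = (+) a ` {k. nrm k \<le> r}"
proof (intro equalityI subsetI)
  fix h assume "h \<in> {h. nrm (- a + h) \<le> r}"
  then show "h \<in> (+) a ` {k. nrm k \<le> r}"
    by (intro image_eqI[where x = "- a + h"]) (simp_all add: add.assoc[symmetric])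
qed (auto simp: add.assoc[symmetric])

lemma card_ball_translate:
  fixes nrm :: "'g::group_add \<Rightarrow> real"
  shows "card {h. nrm (- a + h) \<le> r} = card {k. nrm k \<le> r}"
  unfolding ball_eq_translate by (rule card_image) simp

lemma proper_norm_finite_ball_at:
  fixes nrm :: "'g::group_add \<Rightarrow> real"
  shows "proper_norm nrm \<Longrightarrow> finite {h. nrm (- a + h) \<le> r}"
  unfolding ball_eq_translate by (simp add: proper_norm_finite_ball)

lemma growth_leI:
  assumes "C > 0" "\<And>n. u n \<le> C * v (C * n)"
  shows "growth_le u v"
  unfolding growth_le_def using assms by (blast intro: always_eventually)

lemma growth_le_mono_mult:
  assumes "mono v" "\<And>n. u n \<le> K * v n"
  shows "growth_le u v"
proof (rule growth_leI)
  fix n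
  have "u n \<le> K * v n" by (fact assms(2))
  also have "\<dots> \<le> Suc K * v (Suc K * n)"
    by (intro mult_le_mono monoD[OF assms(1)]) simp_all
  finally show "u n \<le> Suc K * v (Suc K * n)" .
qed simp

lemma growth_le_trans:
  assumes "growth_le u v" "growth_le v w"
  shows "growth_le u w"
proof -
  obtain C :: nat where C: "C > 0" "\<forall>\<^sub>F x in sequentially. u x \<le> C * v (C * x)"
    using assms(1) unfolding growth_le_def by blast
  obtain D :: nat where D: "D > 0" "\<forall>\<^sub>F x in sequentially. v x \<le> D * w (D * x)"
    using assms(2) unfolding growth_le_def by blast
  have "filterlim ((*) C) sequentially sequentially"
    using C(1) by (intro filterlim_subseq strict_monoI) simp
  then have "\<forall>\<^sub>F x in sequentially. v (C * x) \<le> D * w (D * (C * x))"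
    by (rule eventually_compose_filterlim[OF D(2)])
  with C(2) have "\<forall>\<^sub>F x in sequentially. u x \<le> (C * D) * w ((C * D) * x)"
  proof eventually_elim
    case (elim x)
    then have "u x \<le> C * (D * w (D * (C * x)))" using mult_le_mono2 order_trans by blast
    then show ?case by (simp add: ac_simps)
  qed
  then show ?thesis
    unfolding growth_le_def using C(1) D(1) by (intro exI[where x = "C * D"]) simp
qed

lemma growth_type_at_most_if_dominated:
  assumes "growth_type_at_most dY Y f"
    and "\<And>g s. g \<in> X \<Longrightarrow> s > 0 \<Longrightarrow>
           \<exists>g'\<in>Y. \<exists>s'>0. growth_le (gr dX X s g) (gr dY Y s' g')"
  shows "growth_type_at_most dX X f"
  unfolding growth_type_at_most_def
proof (intro ballI allI impI)
  fix g and s :: real assume "g \<in> X" "s > 0"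
  then obtain g' s' where "g' \<in> Y" "s' > 0" "growth_le (gr dX X s g) (gr dY Y s' g')"
    using assms(2) by blast
  then show "growth_le (gr dX X s g) f"
    using assms(1) unfolding growth_type_at_most_def by (blast intro: growth_le_trans)
qed

lemma chain_set_mono_space: "X \<subseteq> Y \<Longrightarrow> chain_set d X s n g \<subseteq> chain_set d Y s n g"
  unfolding chain_set_def by blast

lemma chain_set_mono_length:
  assumes "\<forall>x\<in>X. d x x < s" "m \<le> n"
  shows "chain_set d X s m g \<subseteq> chain_set d X s n g"
proof
  fix h assume "h \<in> chain_set d X s m g"
  then obtain x where x: "h \<in> X" "x 0 = g" "x m = h" "\<forall>i\<le>m. x i \<in> X"
    "\<forall>i<m. d (x i) (x (Suc i)) < s" unfolding chain_set_def by blast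
  \<comment> \<open>pad the chain by standing still at its endpoint\<close>
  define y where "y i = x (min i m)" for i
  have "d (y i) (y (Suc i)) < s" for i
  proof (cases "i < m")
    case True then show ?thesis using x(5) by (simp add: y_def)
  next
    case False then show ?thesis using x(4) assms(1) by (simp add: y_def)
  qed
  moreover have "\<forall>i\<le>n. y i \<in> X" using x(4) by (simp add: y_def)
  ultimately show "h \<in> chain_set d X s n g"
    unfolding chain_set_def using x assms(2) by (auto simp: y_def intro!: exI[where x = y])
qed

lemma chain_set_image:
  assumes "\<forall>x\<in>X. \<phi> x \<in> Y" "\<forall>x\<in>X. \<forall>y\<in>X. dX x y < s \<longrightarrow> dY (\<phi> x) (\<phi> y) < s'"
  shows "\<phi> ` chain_set dX X s n g \<subseteq> chain_set dY Y s' n (\<phi> g)"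
proof
  fix z assume "z \<in> \<phi> ` chain_set dX X s n g"
  then obtain x where x: "z = \<phi> (x n)" "x 0 = g" "\<forall>i\<le>n. x i \<in> X"
    "\<forall>i<n. dX (x i) (x (Suc i)) < s" unfolding chain_set_def by blast
  then have "\<forall>i<n. dY (\<phi> (x i)) (\<phi> (x (Suc i))) < s'" using assms(2) by simp
  then show "z \<in> chain_set dY Y s' n (\<phi> g)"
    unfolding chain_set_def using x assms(1) by (auto intro!: exI[where x = "\<phi> \<circ> x"])
qed

lemma chain_set_subset_translate_closed:
  fixes nrm :: "'g::group_add \<Rightarrow> real" and W :: "nat \<Rightarrow> 'g set"
  assumes "0 \<in> W 0" "\<And>a b i. a \<in> W i \<Longrightarrow> nrm b < s \<Longrightarrow> a + b \<in> W (Suc i)"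
  shows "chain_set (norm_metric nrm) X s n g \<subseteq> (+) g ` W n"
proof
  fix h assume "h \<in> chain_set (norm_metric nrm) X s n g"
  then obtain x where x: "x 0 = g" "x n = h" "\<forall>i<n. nrm (- x i + x (Suc i)) < s"
    unfolding chain_set_def norm_metric_def by blast
  have "i \<le> n \<Longrightarrow> - g + x i \<in> W i" for i
  proof (induction i)
    case 0 then show ?case using x(1) assms(1) by simp
  next
    case (Suc i)
    have "- g + x (Suc i) = (- g + x i) + (- x i + x (Suc i))"
      by (simp add: add.assoc)
    then show ?case using Suc x(3) assms(2) by simp
  qed
  then have "- g + h \<in> W n" using x(2) by blast
  then show "h \<in> (+) g ` W n"
    by (intro image_eqI[where x = "- g + h"]) (simp_all add: add.assoc[symmetric])
qed

lemma chain_set_subset_ball: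
  assumes "proper_norm nrm"
  shows "chain_set (norm_metric nrm) X s n g \<subseteq> {h. nrm (- g + h) \<le> real n * s}"
proof -
  have "chain_set (norm_metric nrm) X s n g \<subseteq> (+) g ` {k. nrm k \<le> real n * s}"
  proof (rule chain_set_subset_translate_closed)
    fix a b and i :: nat assume "a \<in> {k. nrm k \<le> real i * s}" "nrm b < s"
    then show "a + b \<in> {k. nrm k \<le> real (Suc i) * s}"
      using proper_norm_add[OF assms, of a b] by (simp add: algebra_simps)
  qed (simp add: proper_norm_zero[OF assms])
  then show ?thesis unfolding ball_eq_translate .
qed

lemma finite_chain_set: "proper_norm nrm \<Longrightarrow> finite (chain_set (norm_metric nrm) X s n g)"
  using chain_set_subset_ball proper_norm_finite_ball_at finite_subset by metis

lemma gr_mono_space: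
  "proper_norm nrm \<Longrightarrow> X \<subseteq> Y \<Longrightarrow> gr (norm_metric nrm) X s g n \<le> gr (norm_metric nrm) Y s g n"
  unfolding gr_def by (intro card_mono finite_chain_set chain_set_mono_space)

lemma mono_gr:
  assumes "proper_norm nrm" "s > 0"
  shows "mono (gr (norm_metric nrm) X s g)"
proof (rule monoI)
  fix m n :: nat assume "m \<le> n"
  moreover have "\<forall>x\<in>X. norm_metric nrm x x < s"
    using assms by (simp add: norm_metric_def proper_norm_zero)
  ultimately show "gr (norm_metric nrm) X s g m \<le> gr (norm_metric nrm) X s g n"
    unfolding gr_def by (intro card_mono finite_chain_set[OF assms(1)] chain_set_mono_length)
qed

lemma growth_type_at_most_subset:
  assumes "proper_norm nrm" "growth_type_at_most (norm_metric nrm) UNIV f"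
  shows "growth_type_at_most (norm_metric nrm) A f"
proof (rule growth_type_at_most_if_dominated[OF assms(2)])
  fix g and s :: real assume "s > 0"
  have "growth_le (gr (norm_metric nrm) A s g) (gr (norm_metric nrm) UNIV s g)"
    using gr_mono_space[OF assms(1)] by (intro growth_leI[where C = 1]) simp_all
  then show "\<exists>g'\<in>UNIV. \<exists>s'>0. growth_le (gr (norm_metric nrm) A s g) (gr (norm_metric nrm) UNIV s' g')"
    using \<open>s > 0\<close> by blast
qed

lemma card_le_card_image_mult_ball:
  fixes nrm :: "'h::group_add \<Rightarrow> real"
  assumes "proper_norm nrm" "finite (\<phi> ` T)" "\<forall>x\<in>T. nrm (- \<psi> (\<phi> x) + x) \<le> C"
  shows "card T \<le> card (\<phi> ` T) * card {k. nrm k \<le> C}"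
proof -
  have "T \<subseteq> (\<Union>y\<in>\<phi> ` T. {x. nrm (- \<psi> y + x) \<le> C})"
    using assms(3) by blast
  then have "card T \<le> card (\<Union>y\<in>\<phi> ` T. {x. nrm (- \<psi> y + x) \<le> C})"
    using assms(1,2) by (intro card_mono finite_UN_I proper_norm_finite_ball_at)
  also have "\<dots> \<le> (\<Sum>y\<in>\<phi> ` T. card {x. nrm (- \<psi> y + x) \<le> C})"
    using assms(2) by (rule card_UN_le)
  also have "\<dots> = card (\<phi> ` T) * card {k. nrm k \<le> C}"
    by (simp add: card_ball_translate)
  finally show ?thesis .
qed

lemma growth_type_at_most_coarse_embedding:
  fixes nH :: "'h::group_add \<Rightarrow> real" and nG :: "'g::group_add \<Rightarrow> real"
  assumes "proper_norm nH" "proper_norm nG"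
    and "coarse_embedding (norm_metric nH) UNIV (norm_metric nG) UNIV \<phi>"
    and "growth_type_at_most (norm_metric nG) UNIV f"
  shows "growth_type_at_most (norm_metric nH) UNIV f"
proof (rule growth_type_at_most_if_dominated[OF assms(4)])
  fix h and s :: real assume "s > 0"
  let ?dH = "norm_metric nH" and ?dG = "norm_metric nG"
  obtain \<psi> C where C: "\<forall>x. ?dH (\<psi> (\<phi> x)) x \<le> C"
    using assms(3) unfolding coarse_embedding_def coarse_equivalence_def by blast
  have "\<exists>\<epsilon>>0. \<forall>x\<in>UNIV. \<forall>y\<in>UNIV. ?dH x y \<le> s \<longrightarrow> ?dG (\<phi> x) (\<phi> y) \<le> \<epsilon>"
    using assms(3) \<open>s > 0\<close> unfolding coarse_embedding_def coarse_equivalence_def coarse_map_def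
    by blast
  then obtain \<epsilon> where \<epsilon>: "\<epsilon> > 0" "\<forall>x y. ?dH x y \<le> s \<longrightarrow> ?dG (\<phi> x) (\<phi> y) \<le> \<epsilon>"
    by blast
  have "gr ?dH UNIV s h n \<le> card {k. nH k \<le> C} * gr ?dG UNIV (\<epsilon> + 1) (\<phi> h) n" for n
  proof -
    let ?T = "chain_set ?dH UNIV s n h" and ?U = "chain_set ?dG UNIV (\<epsilon> + 1) n (\<phi> h)"
    have "?dG (\<phi> x) (\<phi> y) < \<epsilon> + 1" if "?dH x y < s" for x y
      using \<epsilon>(2) that by (meson less_imp_le less_add_one le_less_trans)
    then have sub: "\<phi> ` ?T \<subseteq> ?U" by (intro chain_set_image) auto
    have "card ?T \<le> card (\<phi> ` ?T) * card {k. nH k \<le> C}"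
      using assms(1) finite_subset[OF sub finite_chain_set[OF assms(2)]] C
      by (intro card_le_card_image_mult_ball[where \<psi> = \<psi>]) (simp_all add: norm_metric_def)
    also have "\<dots> \<le> card ?U * card {k. nH k \<le> C}"
      using sub by (intro mult_le_mono1 card_mono finite_chain_set[OF assms(2)])
    finally show ?thesis unfolding gr_def by (simp add: mult.commute)
  qed
  then have "growth_le (gr ?dH UNIV s h) (gr ?dG UNIV (\<epsilon> + 1) (\<phi> h))"
    using \<epsilon>(1) by (intro growth_le_mono_mult mono_gr[OF assms(2)]) simp_all
  then show "\<exists>g'\<in>UNIV. \<exists>s'>0. growth_le (gr ?dH UNIV s h) (gr ?dG UNIV s' g')"
    using \<epsilon>(1) by (intro bexI[of _ "\<phi> h"] exI[of _ "\<epsilon> + 1"]) simp_all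
qed

lemma finite_word_ball:
  assumes "finite S"
  shows "finite (word_ball S n)"
proof -
  have "word_ball S n = sum_list ` {xs. set xs \<subseteq> S \<union> uminus ` S \<and> length xs \<le> n}"
    unfolding word_ball_def by auto
  then show ?thesis using assms by (simp add: finite_lists_length_le)
qed

lemma word_ball_mono: "m \<le> n \<Longrightarrow> word_ball S m \<subseteq> word_ball S n"
  unfolding word_ball_def by force

lemma zero_in_word_ball: "0 \<in> word_ball S n"
  unfolding word_ball_def by (intro CollectI exI[where x = "[]"]) simp

lemma word_ball_add:
  assumes "a \<in> word_ball S m" "b \<in> word_ball S k"
  shows "a + b \<in> word_ball S (m + k)"
proof -
  obtain xs where "length xs \<le> m" "set xs \<subseteq> S \<union> uminus ` S" "sum_list xs = a"
    using assms(1) unfolding word_ball_def by blast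
  moreover obtain ys where "length ys \<le> k" "set ys \<subseteq> S \<union> uminus ` S" "sum_list ys = b"
    using assms(2) unfolding word_ball_def by blast
  ultimately show ?thesis
    unfolding word_ball_def by (intro CollectI exI[where x = "xs @ ys"]) auto
qed

lemma finite_subset_word_ball:
  assumes "finite B" "generates S"
  shows "\<exists>k. B \<subseteq> word_ball S k"
  using assms(1)
proof (induction B rule: finite_induct)
  case (insert b B)
  then obtain k where k: "B \<subseteq> word_ball S k" by blast
  obtain xs where "set xs \<subseteq> S \<union> uminus ` S" "sum_list xs = b"
    using assms(2) unfolding generates_def by blast
  then have "b \<in> word_ball S (max k (length xs))"
    unfolding word_ball_def by (intro CollectI exI[where x = xs]) auto
  moreover have "B \<subseteq> word_ball S (max k (length xs))"
    using k word_ball_mono[of k "max k (length xs)" S] by auto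
  ultimately show ?case by blast
qed simp

lemma word_ball_subset_chain_set:
  fixes nrm :: "'g::group_add \<Rightarrow> real" and S :: "'g set"
  assumes "proper_norm nrm" "s > 0" "\<forall>x\<in>S. nrm x < s"
  shows "word_ball S n \<subseteq> chain_set (norm_metric nrm) UNIV s n 0"
proof
  fix h assume "h \<in> word_ball S n"
  then obtain xs where xs: "length xs \<le> n" "set xs \<subseteq> S \<union> uminus ` S" "sum_list xs = h"
    unfolding word_ball_def by blast
  define x where "x i = sum_list (take i xs)" for i
  have "norm_metric nrm (x i) (x (Suc i)) < s" for i
  proof (cases "i < length xs")
    case True
    then have "norm_metric nrm (x i) (x (Suc i)) = nrm (xs ! i)"
      unfolding x_def norm_metric_def by (simp add: take_Suc_conv_app_nth add.assoc[symmetric])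
    moreover have "xs ! i \<in> S \<union> uminus ` S" using True xs(2) nth_mem by blast
    ultimately show ?thesis using assms(3) proper_norm_minus[OF assms(1)] by auto
  next
    case False
    then show ?thesis
      using assms(2) proper_norm_zero[OF assms(1)] by (simp add: x_def norm_metric_def)
  qed
  moreover have "x 0 = 0" "x n = h" using xs unfolding x_def by auto
  ultimately show "h \<in> chain_set (norm_metric nrm) UNIV s n 0"
    unfolding chain_set_def by (intro CollectI conjI exI[where x = x]) auto
qed

lemma chain_set_subset_word_ball:
  fixes nrm :: "'g::group_add \<Rightarrow> real" and S :: "'g set"
  assumes "{b. nrm b < s} \<subseteq> word_ball S k"
  shows "chain_set (norm_metric nrm) X s n g \<subseteq> (+) g ` word_ball S (k * n)"
proof (rule chain_set_subset_translate_closed)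
  fix a b and i :: nat assume "a \<in> word_ball S (k * i)" "nrm b < s"
  then show "a + b \<in> word_ball S (k * Suc i)"
    using assms word_ball_add[of a S "k * i" b k] by (auto simp: add.commute)
qed (rule zero_in_word_ball)

lemma gr_growth_le_word_growth:
  fixes nrm :: "'g::group_add \<Rightarrow> real" and S :: "'g set"
  assumes "proper_norm nrm" "finite S" "generates S"
  shows "growth_le (gr (norm_metric nrm) UNIV s g) (word_growth S)"
proof -
  have "finite {b. nrm b < s}"
    using proper_norm_finite_ball[OF assms(1), of s] by (rule finite_subset[rotated]) auto
  then obtain k where "{b. nrm b < s} \<subseteq> word_ball S k"
    using finite_subset_word_ball[OF _ assms(3)] by blast
  then have k: "{b. nrm b < s} \<subseteq> word_ball S (Suc k)"
    using word_ball_mono[of k "Suc k" S] by auto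
  show ?thesis
  proof (rule growth_leI)
    fix n
    have "gr (norm_metric nrm) UNIV s g n \<le> card ((+) g ` word_ball S (Suc k * n))"
      unfolding gr_def using assms(2)
      by (intro card_mono chain_set_subset_word_ball[OF k] finite_imageI finite_word_ball)
    also have "\<dots> \<le> Suc k * word_growth S (Suc k * n)"
      by (simp add: word_growth_def card_image)
    finally show "gr (norm_metric nrm) UNIV s g n \<le> Suc k * word_growth S (Suc k * n)" .
  qed simp
qed

lemma word_growth_growth_le_gr:
  fixes nrm :: "'g::group_add \<Rightarrow> real" and S :: "'g set"
  assumes "proper_norm nrm" "finite S"
  shows "\<exists>s>0. growth_le (word_growth S) (gr (norm_metric nrm) UNIV s 0)"
proof -
  define s where "s = 1 + (\<Sum>x\<in>S. nrm x)"
  have "nrm x < s" if "x \<in> S" for x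
  proof -
    have "nrm x \<le> (\<Sum>x\<in>S. nrm x)"
      using that assms by (intro member_le_sum) (simp_all add: proper_norm_nonneg)
    then show ?thesis by (simp add: s_def)
  qed
  moreover have "s > 0"
    using proper_norm_nonneg[OF assms(1)] by (simp add: s_def add_pos_nonneg sum_nonneg)
  ultimately have "word_growth S n \<le> gr (norm_metric nrm) UNIV s 0 n" for n
    unfolding word_growth_def gr_def using assms
    by (intro card_mono finite_chain_set word_ball_subset_chain_set) auto
  then have "growth_le (word_growth S) (gr (norm_metric nrm) UNIV s 0)"
    by (intro growth_leI[where C = 1]) simp_all
  then show ?thesis using \<open>s > 0\<close> by blast
qed

lemma has_growth_type_word_growth:
  fixes nrm :: "'g::group_add \<Rightarrow> real" and S :: "'g set"
  assumes "proper_norm nrm" "finite S" "generates S"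
  shows "has_growth_type (norm_metric nrm) UNIV (word_growth S)"
  unfolding has_growth_type_def growth_type_at_most_def
  using word_growth_growth_le_gr[OF assms(1,2)] gr_growth_le_word_growth[OF assms] by blast

lemma word_growth_growth_le:
  fixes nrm :: "'g::group_add \<Rightarrow> real" and S :: "'g set"
  assumes "proper_norm nrm" "finite S" "growth_type_at_most (norm_metric nrm) UNIV f"
  shows "growth_le (word_growth S) f"
proof -
  obtain s where "s > 0" "growth_le (word_growth S) (gr (norm_metric nrm) UNIV s 0)"
    using word_growth_growth_le_gr[OF assms(1,2)] by blast
  moreover have "growth_le (gr (norm_metric nrm) UNIV s 0) f"
    using assms(3) \<open>s > 0\<close> unfolding growth_type_at_most_def by blast
  ultimately show ?thesis by (blast intro: growth_le_trans)
qed

theorem mainTheorem8: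
  fixes f :: "nat \<Rightarrow> nat"
    and nG :: "'g::group_add \<Rightarrow> real"
    and nH :: "'h::group_add \<Rightarrow> real"
  assumes "countable (UNIV :: 'g set)" and "countable (UNIV :: 'h set)"
    and "proper_norm nG" and "proper_norm nH"
    and "growth_type_at_most (norm_metric nG) UNIV f"
  shows "(\<forall>A :: 'g set. growth_type_at_most (norm_metric nG) A f)
       \<and> ((\<exists>\<phi> :: 'h \<Rightarrow> 'g. coarse_embedding (norm_metric nH) UNIV (norm_metric nG) UNIV \<phi>)
            \<longrightarrow> growth_type_at_most (norm_metric nH) UNIV f)
       \<and> ((\<exists>S :: 'g set. finite S \<and> generates S) \<longrightarrow>
            (\<forall>S :: 'g set. finite S \<and> generates S \<longrightarrow>
                growth_le (word_growth S) f \<and>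
                has_growth_type (norm_metric nG) UNIV (word_growth S)))"
  using growth_type_at_most_subset[OF assms(3,5)]
    growth_type_at_most_coarse_embedding[OF assms(4,3) _ assms(5)]
    word_growth_growth_le[OF assms(3) _ assms(5)] has_growth_type_word_growth[OF assms(3)]
  by blast

end
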